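(* The size $\gamma$ of the smallest string attractor satisfies, for each edit type $\ast\in\{\mathrm{sub},\mathrm{ins},\mathrm{del}\}$: $\mathsf{MS}_{\ast}(\gamma,n)=O(\log n)$ and $\mathsf{AS}_{\ast}(\gamma,n)=O(\delta\log n)$; that is, there is a constant $c$ such that for every string $T$ of length $n$ and every string $T'$ with $\mathsf{ed}(T,T')=1$ (of the corresponding type), $\gamma(T')\le c\,\gamma(T)\log n$ and $\gamma(T')-\gamma(T)\le c\,\delta(T)\log n$.
   Context: Strings are over an alphabet $\Sigma$; $\mathsf{ed}$ is the edit distance (single-character substitutions, insertions, deletions). For a measure $C$: $\mathsf{MS}_{\mathrm{sub}}(C,n)=\max_{T\in\Sigma^n}\{C(T')/C(T): T'\in\Sigma^n,\ \mathsf{ed}(T,T')=1\}$, with $\mathsf{MS}_{\mathrm{ins}},\mathsf{MS}_{\mathrm{del}}$ analogous for $T'$ of length $n+1$, resp. $n-1$, and $\mathsf{AS}_\ast$ analogous with $C(T')-C(T)$. A string attractor of $T$ is a set $\Gamma$ of positions such that every substring of $T$ has an occurrence $T[i..j]$ containing a position of $\Gamma$; $\gamma(T)$ is the minimum size of a string attractor. $\delta(T)=\max_{1\le k\le |T|}\mathsf{Substr}(T,k)/k$, where $\mathsf{Substr}(T,k)$ is the number of distinct length-$k$ substrings of $T$; bounds stated in terms of $\delta$ use $\delta(T)$ of the original string $T$. *)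

theory Defs
  imports Complex_Main
begin

text \<open>Strings are lists over an arbitrary alphabet type 'a; positions are 0-based.\<close>

fun ed :: "'a list \<Rightarrow> 'a list \<Rightarrow> nat" where
  "ed [] ys = length ys"
| "ed xs [] = length xs"
| "ed (x # xs) (y # ys) =
     min (min (ed xs ys + (if x = y then 0 else 1)) (ed xs (y # ys) + 1)) (ed (x # xs) ys + 1)"

definition substr :: "'a list \<Rightarrow> nat \<Rightarrow> nat \<Rightarrow> 'a list" where
  "substr T i len = take len (drop i T)"

definition is_attractor :: "'a list \<Rightarrow> nat set \<Rightarrow> bool" where
  "is_attractor T \<Gamma> \<longleftrightarrow> \<Gamma> \<subseteq> {..<length T} \<and>
     (\<forall>i j. i \<le> j \<and> j < length T \<longrightarrow>
        (\<exists>i' j'. j' < length T \<and> i' \<le> j' \<and> j' - i' = j - i \<and>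
           substr T i' (j' - i' + 1) = substr T i (j - i + 1) \<and>
           (\<exists>p\<in>\<Gamma>. i' \<le> p \<and> p \<le> j')))"

definition gamma :: "'a list \<Rightarrow> nat" where
  "gamma T = (LEAST k. \<exists>\<Gamma>. is_attractor T \<Gamma> \<and> card \<Gamma> = k)"

definition Substr :: "'a list \<Rightarrow> nat \<Rightarrow> nat" where
  "Substr T k = card {substr T i k | i. i + k \<le> length T}"

definition delta :: "'a list \<Rightarrow> real" where
  "delta T = (if T = [] then 0
              else Max ((\<lambda>k. real (Substr T k) / real k) ` {1..length T}))"

end

theory Submission
  imports Defs
begin

text \<open>An attractor \<open>\<Gamma>\<close> places every length-\<open>m\<close> substring at one of the \<open>m |\<Gamma>|\<close> starting
  positions \<open>p - r\<close> (\<open>p \<in> \<Gamma>\<close>, \<open>r < m\<close>), so \<open>\<delta> \<le> \<gamma>\<close>. Conversely, for each scale \<open>k = 2^e\<close>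
  call a multiple \<open>p\<close> of \<open>k\<close> an anchor if every position of \<open>[p - k, p]\<close> is the leftmost
  occurrence of its length-\<open>4k\<close> window, and keep the multiples of \<open>k\<close> below \<open>4k\<close> or within
  \<open>4k\<close> after an anchor. The leftmost occurrence of a substring of length in \<open>[k, 2k)\<close> always
  contains one of them, and disjointness of the anchor blocks bounds their number by
  \<open>O(Substr(T, 4k)/k + 1)\<close>. Hence \<open>\<gamma>(S) = O(D log n)\<close> whenever \<open>Substr(S, m) \<le> m D\<close> for all \<open>m\<close>.
  A single edit creates at most \<open>m\<close> new length-\<open>m\<close> substrings, so \<open>T'\<close> satisfies this with
  \<open>D = \<delta>(T) + 1 \<le> 2 \<delta>(T)\<close>, giving \<open>\<gamma>(T') = O(\<delta>(T) log n)\<close>; both claims follow from \<open>\<delta> \<le> \<gamma>\<close>.\<close>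

lemma ed_eq_0D: "ed xs ys = 0 \<Longrightarrow> xs = ys"
  by (induction xs ys rule: ed.induct) (auto split: if_splits)

lemma ed_le_1_split:
  "ed xs ys \<le> 1 \<Longrightarrow>
     \<exists>u v x y. xs = u @ x @ v \<and> ys = u @ y @ v \<and> length x \<le> 1 \<and> length y \<le> 1"
proof (induction xs ys rule: ed.induct)
  case (1 ys)
  then show ?case by (intro exI[of _ "[]"] exI[of _ ys]) simp
next
  case (2 x xs)
  then show ?case by (intro exI[of _ "[]"] exI[of _ "x # xs"]) simp
next
  case (3 x xs y ys)
  from "3.prems" consider "x = y" "ed xs ys \<le> 1" | "ed xs ys = 0"
    | "ed xs (y # ys) = 0" | "ed (x # xs) ys = 0"
    by (fastforce split: if_splits)
  then show ?case
  proof cases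
    case 1
    with "3.IH"(1) obtain u v a b
      where "xs = u @ a @ v" "ys = u @ b @ v" "length a \<le> 1" "length b \<le> 1"
      by blast
    with \<open>x = y\<close> show ?thesis by (intro exI[of _ "x # u"] exI[of _ v] exI[of _ a] exI[of _ b]) simp
  next
    case 2
    then show ?thesis
      by (intro exI[of _ "[]"] exI[of _ xs] exI[of _ "[x]"] exI[of _ "[y]"]) (auto dest: ed_eq_0D)
  next
    case 3
    then show ?thesis
      by (intro exI[of _ "[]"] exI[of _ xs] exI[of _ "[x]"] exI[of _ "[]"]) (auto dest: ed_eq_0D)
  next
    case 4
    then show ?thesis
      by (intro exI[of _ "[]"] exI[of _ ys] exI[of _ "[]"] exI[of _ "[y]"]) (auto dest: ed_eq_0D)
  qed
qed

lemma substr_substr: "d + l \<le> m \<Longrightarrow> substr (substr T c m) d l = substr T (c + d) l"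
  by (simp add: substr_def drop_take min_def add.commute)

lemma length_substr: "length (substr T i m) = min m (length T - i)"
  by (simp add: substr_def)

lemma finite_substrs: "finite {substr T i m | i. i + m \<le> length T}"
proof -
  have "{substr T i m | i. i + m \<le> length T} \<subseteq> (\<lambda>i. substr T i m) ` {..length T}"
    by auto
  then show ?thesis using finite_surj by blast
qed

lemma Substr_append_edit:
  "Substr (u @ y @ v) m \<le> Substr (u @ x @ v) m + (length y + m - 1)"
proof -
  let ?T = "u @ x @ v" and ?T' = "u @ y @ v"
  let ?I = "{Suc (length u) - m..<length u + length y}"
  have "{substr ?T' i m | i. i + m \<le> length ?T'} \<subseteq>
      {substr ?T i m | i. i + m \<le> length ?T} \<union> (\<lambda>i. substr ?T' i m) ` ?I"
  proof
    fix w assume "w \<in> {substr ?T' i m | i. i + m \<le> length ?T'}"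
    then obtain i where i: "w = substr ?T' i m" "i + m \<le> length ?T'" by auto
    consider "i + m \<le> length u" | "length u + length y \<le> i" | "i \<in> ?I" by force
    then show "w \<in> {substr ?T i m | i. i + m \<le> length ?T} \<union> (\<lambda>i. substr ?T' i m) ` ?I"
    proof cases
      case 1
      then have "w = substr ?T i m" "i + m \<le> length ?T" using i by (simp_all add: substr_def)
      then show ?thesis by blast
    next
      case 2
      then have "w = substr ?T (i - length y + length x) m" "i - length y + length x + m \<le> length ?T"
        using i by (simp_all add: substr_def add.commute)
      then show ?thesis by blast
    qed (use i in blast)
  qed
  then have "Substr ?T' m \<le> card ({substr ?T i m | i. i + m \<le> length ?T} \<union> (\<lambda>i. substr ?T' i m) ` ?I)"
    unfolding Substr_def
    by (intro card_mono finite_UnI finite_substrs finite_imageI finite_atLeastLessThan)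
  also have "\<dots> \<le> Substr ?T m + card ?I"
    unfolding Substr_def by (intro order.trans[OF card_Un_le] add_left_mono card_image_le) simp
  finally show ?thesis by simp
qed

lemma finite_attractor: "is_attractor T G \<Longrightarrow> finite G"
  unfolding is_attractor_def using finite_subset by blast

lemma is_attractor_all_positions: "is_attractor T {..<length T}"
  unfolding is_attractor_def
proof (intro conjI allI impI)
  fix i j assume "i \<le> j \<and> j < length T"
  then show "\<exists>i' j'. j' < length T \<and> i' \<le> j' \<and> j' - i' = j - i \<and>
      substr T i' (j' - i' + 1) = substr T i (j - i + 1) \<and> (\<exists>p\<in>{..<length T}. i' \<le> p \<and> p \<le> j')"
    by (intro exI[of _ i] exI[of _ j]) auto
qed simp

lemma gamma_le_card: "is_attractor T G \<Longrightarrow> gamma T \<le> card G"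
  unfolding gamma_def by (rule Least_le) blast

lemma gamma_attained: "\<exists>G. is_attractor T G \<and> card G = gamma T"
  unfolding gamma_def by (rule LeastI_ex) (use is_attractor_all_positions in blast)

lemma Substr_le_card_attractor:
  assumes G: "is_attractor T G" and m: "m \<ge> 1"
  shows "Substr T m \<le> m * card G"
proof -
  have "{substr T i m | i. i + m \<le> length T} \<subseteq> (\<lambda>(p, r). substr T (p - r) m) ` (G \<times> {..<m})"
  proof
    fix w assume "w \<in> {substr T i m | i. i + m \<le> length T}"
    then obtain i where i: "w = substr T i m" "i + m \<le> length T" by auto
    then have "i \<le> i + m - 1 \<and> i + m - 1 < length T" using m by auto
    with G obtain i' j' p where "j' - i' = (i + m - 1) - i" "i' \<le> j'"
        "substr T i' (j' - i' + 1) = substr T i ((i + m - 1) - i + 1)" and p: "p \<in> G" "i' \<le> p" "p \<le> j'"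
      unfolding is_attractor_def by blast
    then have "w = substr T (p - (p - i')) m" "p - i' < m" using i m by auto
    with p show "w \<in> (\<lambda>(p, r). substr T (p - r) m) ` (G \<times> {..<m})"
      by (intro image_eqI[where x="(p, p - i')"]) auto
  qed
  then have "Substr T m \<le> card ((\<lambda>(p, r). substr T (p - r) m) ` (G \<times> {..<m}))"
    unfolding Substr_def by (rule card_mono[rotated]) (simp add: finite_attractor[OF G])
  also have "\<dots> \<le> card (G \<times> {..<m})" by (rule card_image_le) (simp add: finite_attractor[OF G])
  finally show ?thesis by (simp add: card_cartesian_product mult.commute)
qed

lemma delta_le_gamma: "delta T \<le> real (gamma T)"
proof (cases "T = []")
  case False
  obtain G where G: "is_attractor T G" "card G = gamma T" using gamma_attained by blast
  have "real (Substr T k) / real k \<le> real (gamma T)" if "k \<ge> 1" for k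
    using Substr_le_card_attractor[OF G(1) that] that G(2)
    by (simp add: divide_le_eq mult.commute flip: of_nat_mult)
  with False show ?thesis unfolding delta_def by (auto intro!: Max.boundedI simp: Suc_le_eq)
qed (simp add: delta_def)

lemma Substr_div_le_delta:
  assumes "1 \<le> m" "m \<le> length T"
  shows "real (Substr T m) / real m \<le> delta T"
  using assms unfolding delta_def by (auto intro!: Max_ge)

lemma Substr_eq_0: "length T < m \<Longrightarrow> Substr T m = 0"
  unfolding Substr_def by simp

lemma one_le_delta:
  assumes "T \<noteq> []" shows "1 \<le> delta T"
proof -
  have "substr T 0 1 \<in> {substr T i 1 | i. i + 1 \<le> length T}"
    using assms by (auto simp: Suc_le_eq)
  then have "1 \<le> Substr T 1"
    unfolding Substr_def using finite_substrs by (auto simp: Suc_le_eq card_gt_0_iff)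
  also have "real (Substr T 1) \<le> delta T"
    using Substr_div_le_delta[of 1 T] assms by (simp add: Suc_le_eq)
  finally show ?thesis by simp
qed

lemma Substr_le_delta:
  assumes "T \<noteq> []" "1 \<le> m"
  shows "real (Substr T m) \<le> real m * delta T"
proof (cases "m \<le> length T")
  case True
  then show ?thesis using Substr_div_le_delta[OF assms(2)] assms by (simp add: divide_le_eq mult.commute)
next
  case False
  then show ?thesis using Substr_eq_0[of T m] one_le_delta[OF assms(1)] by simp
qed

definition leftmost_occs :: "'a list \<Rightarrow> nat \<Rightarrow> nat set" where
  "leftmost_occs T w = {i. i < length T \<and> (\<forall>i'<i. substr T i' w \<noteq> substr T i w)}"

definition anchors :: "'a list \<Rightarrow> nat \<Rightarrow> nat set" where
  "anchors T k = {p. k dvd p \<and> k \<le> p \<and> {p - k..p} \<subseteq> leftmost_occs T (4 * k)}"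

definition level_positions :: "'a list \<Rightarrow> nat \<Rightarrow> nat set" where
  "level_positions T k = {q. q < length T \<and> k dvd q \<and>
     (q < 4 * k \<or> (\<exists>p\<in>anchors T k. p \<le> q \<and> q < p + 4 * k))}"

definition dyadic_attractor :: "'a list \<Rightarrow> nat set" where
  "dyadic_attractor T = (\<Union>e\<in>{e. 2 ^ e \<le> length T}. level_positions T (2 ^ e))"

lemma finite_leftmost_occs: "finite (leftmost_occs T w)"
  unfolding leftmost_occs_def by auto

text \<open>Distinct leftmost occurrences carry distinct windows; only the last \<open>w\<close> of them can be
  truncated by the end of \<open>T\<close>.\<close>
lemma card_leftmost_occs_le: "card (leftmost_occs T w) \<le> Substr T w + w"
proof -
  let ?win = "\<lambda>i. substr T i w"
  have "inj_on ?win (leftmost_occs T w)"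
  proof (rule inj_onI)
    fix i i' assume "i \<in> leftmost_occs T w" "i' \<in> leftmost_occs T w" "?win i = ?win i'"
    then show "i = i'" unfolding leftmost_occs_def by (cases i i' rule: linorder_cases) auto
  qed
  moreover have "?win ` leftmost_occs T w \<subseteq>
      {substr T i w | i. i + w \<le> length T} \<union> ?win ` {length T - w..<length T}"
    unfolding leftmost_occs_def by force
  ultimately have "card (leftmost_occs T w) \<le>
      card ({substr T i w | i. i + w \<le> length T} \<union> ?win ` {length T - w..<length T})"
    by (simp add: card_mono finite_substrs flip: card_image)
  also have "\<dots> \<le> Substr T w + card (?win ` {length T - w..<length T})"
    unfolding Substr_def by (rule card_Un_le)
  also have "card (?win ` {length T - w..<length T}) \<le> w"
    using card_image_le[of "{length T - w..<length T}" ?win] by simp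
  finally show ?thesis by simp
qed

text \<open>The blocks \<open>[p - k, p)\<close> of distinct anchors are disjoint.\<close>
lemma card_anchors_mult_le:
  assumes k: "k \<ge> 1"
  shows "card (anchors T k) * k \<le> card (leftmost_occs T (4 * k))"
proof -
  let ?f = "\<lambda>(p, j). p - k + j"
  have block: "p - k + j = k * (p div k - 1) + j" if "p \<in> anchors T k" for p j
    using that unfolding anchors_def by (auto simp: diff_mult_distrib2)
  have "inj_on ?f (anchors T k \<times> {..<k})"
  proof (rule inj_onI, clarify)
    fix p j p' j'
    assume "p \<in> anchors T k" "j < k" "p' \<in> anchors T k" "j' < k" and eq: "p - k + j = p' - k + j'"
    then have blocks: "k * (p div k - 1) + j = k * (p' div k - 1) + j'" by (simp add: block)
    have "j = (k * (p div k - 1) + j) mod k" using \<open>j < k\<close> by simp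
    also have "\<dots> = j'" unfolding blocks using \<open>j' < k\<close> by simp
    finally have "j = j'" .
    moreover have "k \<le> p" "k \<le> p'" using \<open>p \<in> anchors T k\<close> \<open>p' \<in> anchors T k\<close> unfolding anchors_def by auto
    ultimately show "p = p' \<and> j = j'" using eq by auto
  qed
  moreover have "?f ` (anchors T k \<times> {..<k}) \<subseteq> leftmost_occs T (4 * k)"
  proof clarify
    fix p j assume "p \<in> anchors T k" "j < k"
    then have "p - k + j \<in> {p - k..p}" "{p - k..p} \<subseteq> leftmost_occs T (4 * k)"
      unfolding anchors_def by auto
    then show "p - k + j \<in> leftmost_occs T (4 * k)" by blast
  qed
  ultimately have "card (anchors T k \<times> {..<k}) \<le> card (leftmost_occs T (4 * k))"
    by (metis card_image card_mono finite_leftmost_occs)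
  then show ?thesis by (simp add: card_cartesian_product)
qed

lemma finite_anchors: "finite (anchors T k)"
proof -
  have "anchors T k \<subseteq> leftmost_occs T (4 * k)" unfolding anchors_def by auto
  then show ?thesis using finite_leftmost_occs finite_subset by blast
qed

lemma card_level_positions_le:
  assumes k: "k \<ge> 1"
  shows "card (level_positions T k) \<le> 4 * (card (anchors T k) + 1)"
proof -
  let ?f = "\<lambda>(p, j). p + j * k"
  have "level_positions T k \<subseteq> ?f ` (insert 0 (anchors T k) \<times> {..<4})"
  proof
    fix q assume q: "q \<in> level_positions T k"
    then obtain c where c: "q = k * c" unfolding level_positions_def by auto
    from q consider "q < 4 * k" | p where "p \<in> anchors T k" "p \<le> q" "q < p + 4 * k"
      unfolding level_positions_def by auto
    then show "q \<in> ?f ` (insert 0 (anchors T k) \<times> {..<4})"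
    proof cases
      case 1
      then have "c < 4" using c k by simp
      with c show ?thesis by (auto intro!: image_eqI[where x="(0, c)"])
    next
      case 2
      then obtain a where a: "p = k * a" unfolding anchors_def by auto
      with 2 c have "k * a \<le> k * c" "k * c < k * (a + 4)" by (simp_all add: algebra_simps)
      with k have "a \<le> c" "c < a + 4" by simp_all
      with a c have "q = p + (c - a) * k" "c - a < 4" by (auto simp: algebra_simps diff_mult_distrib)
      with 2 show ?thesis by (auto intro!: image_eqI[where x="(p, c - a)"])
    qed
  qed
  then have "card (level_positions T k) \<le> card (?f ` (insert 0 (anchors T k) \<times> {..<4}))"
    by (rule card_mono[rotated]) (simp add: finite_anchors)
  also have "\<dots> \<le> card (insert 0 (anchors T k) \<times> {..<4::nat})"
    by (rule card_image_le) (simp add: finite_anchors)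
  also have "\<dots> \<le> (card (anchors T k) + 1) * 4"
    by (simp add: card_cartesian_product card_insert_if finite_anchors)
  finally show ?thesis by simp
qed

text \<open>Shifting an earlier occurrence of the length-\<open>W\<close> window at \<open>x\<close> by \<open>s - x\<close> would give an
  earlier occurrence of the length-\<open>l\<close> substring at \<open>s\<close>.\<close>
lemma leftmost_occs_before_leftmost:
  assumes leftmost: "\<forall>s'<s. substr T s' l \<noteq> substr T s l"
    and "x \<le> s" "s + l \<le> x + W" "x < length T"
  shows "x \<in> leftmost_occs T W"
  unfolding leftmost_occs_def
proof (intro CollectI conjI allI impI notI)
  fix i assume "i < x" and same: "substr T i W = substr T x W"
  have "s - x + l \<le> W" using assms(2,3) by simp
  then have "substr T (i + (s - x)) l = substr T (x + (s - x)) l"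
    by (metis same substr_substr)
  moreover have "i + (s - x) < s" using \<open>i < x\<close> \<open>x \<le> s\<close> by simp
  ultimately show False using leftmost \<open>x \<le> s\<close> by simp
qed (use assms in simp)

lemma level_positions_cover:
  assumes k: "k \<ge> 1" and l: "k \<le> l" "l < 2 * k" and i: "i + l \<le> length T"
  shows "\<exists>s q. substr T s l = substr T i l \<and> s + l \<le> length T \<and>
    q \<in> level_positions T k \<and> s \<le> q \<and> q < s + l"
proof -
  define s where "s = (LEAST s. substr T s l = substr T i l)"
  have occ: "substr T s l = substr T i l" unfolding s_def by (rule LeastI[of _ i]) simp
  have leftmost: "\<forall>s'<s. substr T s' l \<noteq> substr T s l"
  proof (intro allI impI)
    fix s' assume "s' < s"
    then show "substr T s' l \<noteq> substr T s l" unfolding occ unfolding s_def by (rule not_less_Least)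
  qed
  have "length (substr T s l) = l" using occ i by (simp add: length_substr)
  then have s_end: "s + l \<le> length T" using k l by (simp add: length_substr)
  text \<open>\<open>q\<close> is the least multiple of \<open>k\<close> that is \<open>\<ge> s\<close>.\<close>
  define q where "q = (s + k - 1) div k * k"
  have "s \<le> q" "q < s + k"
    using div_times_less_eq_dividend[of "s + k - 1" k] dividend_less_div_times[of k "s + k - 1"] k
    unfolding q_def by linarith+
  then have q: "s \<le> q" "q < s + l" "q < length T" "k dvd q" using l s_end unfolding q_def by auto
  have "q \<in> level_positions T k"
  proof (cases "s + l < 4 * k")
    case True
    with q show ?thesis unfolding level_positions_def by auto
  next
    case False
    text \<open>\<open>p\<close> is the largest multiple of \<open>k\<close> that is \<open>\<le> s + l - 2k\<close>; its whole block lies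
      in the window \<open>[s + l - 4k, s]\<close>, whose positions are leftmost occurrences.\<close>
    define p where "p = (s + l - 2 * k) div k * k"
    have p: "p \<le> s + l - 2 * k" "s + l - 2 * k < p + k"
      using div_times_less_eq_dividend[of "s + l - 2 * k" k] dividend_less_div_times[of k "s + l - 2 * k"] k
      unfolding p_def by linarith+
    have "{p - k..p} \<subseteq> leftmost_occs T (4 * k)"
    proof
      fix x assume "x \<in> {p - k..p}"
      with p False l s_end show "x \<in> leftmost_occs T (4 * k)"
        by (intro leftmost_occs_before_leftmost[OF leftmost]) auto
    qed
    moreover have "k \<le> p" using p False by linarith
    moreover have "k dvd p" unfolding p_def by simp
    ultimately have "p \<in> anchors T k" unfolding anchors_def by auto
    moreover have "p \<le> q" "q < p + 4 * k" using p q False l by auto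
    ultimately show ?thesis using q unfolding level_positions_def by auto
  qed
  with occ s_end q show ?thesis by blast
qed

lemma is_attractor_dyadic_attractor: "is_attractor T (dyadic_attractor T)"
  unfolding is_attractor_def
proof (intro conjI allI impI)
  show "dyadic_attractor T \<subseteq> {..<length T}"
    unfolding dyadic_attractor_def level_positions_def by auto
next
  fix i j assume ij: "i \<le> j \<and> j < length T"
  define l where "l = j - i + 1"
  obtain e where e: "2 ^ e \<le> l" "l < 2 ^ (e + 1)" using ex_power_ivl1[of 2 l] l_def by auto
  then obtain s q where sq: "substr T s l = substr T i l" "s + l \<le> length T"
      "q \<in> level_positions T (2 ^ e)" "s \<le> q" "q < s + l"
    using level_positions_cover[of "2 ^ e" l i T] ij l_def by auto
  moreover have "2 ^ e \<le> length T" using e ij l_def by auto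
  with sq(3) have "q \<in> dyadic_attractor T" unfolding dyadic_attractor_def by auto
  ultimately show "\<exists>i' j'. j' < length T \<and> i' \<le> j' \<and> j' - i' = j - i \<and>
      substr T i' (j' - i' + 1) = substr T i (j - i + 1) \<and> (\<exists>p\<in>dyadic_attractor T. i' \<le> p \<and> p \<le> j')"
    by (intro exI[of _ s] exI[of _ "s + l - 1"]) (auto simp: l_def)
qed

lemma finite_levels: "finite {e. (2::nat) ^ e \<le> n}"
  by (rule finite_subset[of _ "{..n}"]) (auto intro: order.trans[OF less_imp_le[OF less_exp]])

lemma gamma_le_card_levels:
  assumes D: "\<And>m. m \<ge> 1 \<Longrightarrow> real (Substr T m) \<le> real m * D"
  shows "real (gamma T) \<le> (16 * D + 20) * card {e. 2 ^ e \<le> length T}"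
proof -
  let ?E = "{e::nat. 2 ^ e \<le> length T}"
  have level: "real (card (level_positions T k)) \<le> 16 * D + 20" if k: "k \<ge> 1" for k
  proof -
    have "real (card (anchors T k)) * k \<le> real (Substr T (4 * k)) + 4 * k"
      using card_anchors_mult_le[OF k, of T] card_leftmost_occs_le[of T "4 * k"]
      by (simp flip: of_nat_mult of_nat_add)
    also have "\<dots> \<le> (4 * D + 4) * k" using D[of "4 * k"] k by (simp add: algebra_simps)
    finally have "real (card (anchors T k)) \<le> 4 * D + 4" using k by simp
    moreover have "real (card (level_positions T k)) \<le> 4 * (real (card (anchors T k)) + 1)"
      using card_level_positions_le[OF k, of T] by (simp flip: of_nat_mult)
    ultimately show ?thesis by (simp add: algebra_simps)
  qed
  have "gamma T \<le> (\<Sum>e\<in>?E. card (level_positions T (2 ^ e)))"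
    using gamma_le_card[OF is_attractor_dyadic_attractor] card_UN_le[OF finite_levels]
    unfolding dyadic_attractor_def by (rule order.trans)
  then have "real (gamma T) \<le> (\<Sum>e\<in>?E. real (card (level_positions T (2 ^ e))))"
    by (simp flip: of_nat_sum)
  also have "\<dots> \<le> (\<Sum>e\<in>?E. 16 * D + 20)" by (intro sum_mono level) simp
  finally show ?thesis by (simp add: mult.commute)
qed

lemma card_levels_le_log:
  assumes "N \<ge> 1"
  shows "real (card {e. (2::nat) ^ e \<le> N}) \<le> log 2 (real N) + 1"
proof -
  let ?L = "log 2 (real N)"
  have "{e. (2::nat) ^ e \<le> N} \<subseteq> {..nat \<lfloor>?L\<rfloor>}"
  proof
    fix e assume "e \<in> {e. (2::nat) ^ e \<le> N}"
    then have "(2::real) powr real e \<le> real N" by (simp add: powr_realpow flip: of_nat_le_iff)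
    then have "real e \<le> ?L" using assms by (simp add: le_log_iff)
    then show "e \<in> {..nat \<lfloor>?L\<rfloor>}" by (simp add: le_nat_floor)
  qed
  then have "card {e. (2::nat) ^ e \<le> N} \<le> nat \<lfloor>?L\<rfloor> + 1"
    using card_mono[of "{..nat \<lfloor>?L\<rfloor>}"] by fastforce
  moreover have "real (nat \<lfloor>?L\<rfloor>) \<le> ?L" using assms by simp
  ultimately show ?thesis by linarith
qed

lemma log2_Suc_plus_1_le_ln:
  assumes "n \<ge> (2::nat)"
  shows "log 2 (real (n + 1)) + 1 \<le> 3 / ln 2 * ln (real n)"
proof -
  have n: "real n \<ge> 2" using assms by simp
  then have "2 * real n \<le> real n * real n" by (intro mult_right_mono) auto
  with n have "real n + 1 \<le> real n * real n" by linarith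
  with n have "ln (real n + 1) \<le> ln (real n * real n)" by simp
  also have "\<dots> = 2 * ln (real n)" using n by (simp add: ln_mult)
  moreover have "ln 2 \<le> ln (real n)" using n by simp
  ultimately have "ln (real n + 1) + ln 2 \<le> 3 * ln (real n)" by linarith
  then have "(ln (real n + 1) + ln 2) / ln 2 \<le> 3 * ln (real n) / ln 2"
    by (rule divide_right_mono) simp
  then show ?thesis by (simp add: log_def add_divide_distrib add.commute)
qed

lemma gamma_edit_le:
  assumes ed: "ed T T' \<le> 1" and T: "T \<noteq> []"
  shows "real (gamma T') \<le> (16 * delta T + 36) * (log 2 (real (length T + 1)) + 1)"
proof -
  obtain u v x y where split: "T = u @ x @ v" "T' = u @ y @ v" "length y \<le> 1"
    using ed_le_1_split[OF ed] by blast
  have "real (Substr T' m) \<le> real m * (delta T + 1)" if m: "m \<ge> 1" for m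
  proof -
    have "Substr T' m \<le> Substr T m + m"
      using Substr_append_edit[of u y v m x] split by simp
    then show ?thesis using Substr_le_delta[OF T m] by (simp add: algebra_simps)
  qed
  then have "real (gamma T') \<le> (16 * delta T + 36) * card {e. 2 ^ e \<le> length T'}"
    using gamma_le_card_levels[of T' "delta T + 1"] by (simp add: algebra_simps)
  also have "\<dots> \<le> (16 * delta T + 36) * (log 2 (real (length T + 1)) + 1)"
  proof (rule mult_left_mono)
    have "card {e. (2::nat) ^ e \<le> length T'} \<le> card {e. (2::nat) ^ e \<le> length T + 1}"
      using split by (intro card_mono finite_levels) auto
    then show "real (card {e. (2::nat) ^ e \<le> length T'}) \<le> log 2 (real (length T + 1)) + 1"
      using card_levels_le_log[of "length T + 1"] by (simp del: of_nat_add)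
  qed (use one_le_delta[OF T] in simp)
  finally show ?thesis .
qed

theorem mainTheorem4:
  shows "\<exists>c::real. \<exists>n0::nat. \<forall>(T::'a list) (T'::'a list).
     length T \<ge> n0 \<and> ed T T' = 1 \<and>
     (length T' = length T \<or> length T' = length T + 1 \<or> length T' + 1 = length T) \<longrightarrow>
       real (gamma T') \<le> c * real (gamma T) * ln (real (length T)) \<and>
       real (gamma T') - real (gamma T) \<le> c * delta T * ln (real (length T))"
proof (intro exI[of _ "156 / ln 2"] exI[of _ 2] allI impI)
  fix T T' :: "'a list"
  let ?n = "length T"
  assume "?n \<ge> 2 \<and> ed T T' = 1 \<and>
    (length T' = ?n \<or> length T' = ?n + 1 \<or> length T' + 1 = ?n)"
  then have n: "?n \<ge> 2" and ed: "ed T T' \<le> 1" by auto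
  then have T: "T \<noteq> []" by auto
  have "real (gamma T') \<le> (16 * delta T + 36) * (log 2 (real (?n + 1)) + 1)"
    by (rule gamma_edit_le[OF ed T])
  also have "\<dots> \<le> 52 * delta T * (3 / ln 2 * ln (real ?n))"
    using one_le_delta[OF T] log2_Suc_plus_1_le_ln[OF n] n
    by (intro mult_mono) auto
  finally have "real (gamma T') \<le> 156 / ln 2 * delta T * ln (real ?n)" by simp
  moreover have "156 / ln 2 * delta T * ln (real ?n) \<le> 156 / ln 2 * real (gamma T) * ln (real ?n)"
    using delta_le_gamma[of T] n by (intro mult_right_mono mult_left_mono) auto
  ultimately show "real (gamma T') \<le> 156 / ln 2 * real (gamma T) * ln (real ?n) \<and>
      real (gamma T') - real (gamma T) \<le> 156 / ln 2 * delta T * ln (real ?n)"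
    by simp
qed

end
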